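(* Let $n\in\mathbb N$ and $X$ a partial order. For all $s\in\mathbb{T}_{n+1}^-(X)$ and all $t\in\mathbb{T}_n(\mathbb{T}_{n+1}^-(X))$ we have $$s\leq_{\mathbb{T}_{n+1}(X)}\pi^n_X(t)\iff s\leq^{\mathrm{fin}}_{\mathbb{T}_{n+1}^-(X)}\operatorname{supp}^{\mathbb{T}_n}_{\mathbb{T}_{n+1}^-(X)}(t),$$ i.e. iff there is $t'\in\operatorname{supp}^{\mathbb{T}_n}_{\mathbb{T}_{n+1}^-(X)}(t)$ with $s\leq_{\mathbb{T}_{n+1}^-(X)}t'$.
   Context: For a partial order $X$, $M(X)$ is the set of finite multisets $[x_0,\dots,x_{m-1}]$ with elements from $X$, ordered by $[x_0,\dots,x_{m-1}]\leq_{M(X)}[y_0,\dots,y_{k-1}]$ iff there is an injection $g$ with $x_i\leq_X y_{g(i)}$ for all $i<m$. For $n\in\mathbb N$ and a partial order $X$, $\mathbb{T}_n(X)$ is generated by: $\overline x$ for each $x\in X$; $i\star\sigma$ for each $\sigma=[t_0,\dots,t_{m-1}]\in M(\mathbb{T}_n(X))$ and $i<n$. For $n>0$, $\mathbb{T}_n^-(X)=\{\overline x\mid x\in X\}\cup\{0\star\sigma\mid\sigma\in M(\mathbb{T}_n(X))\}\subseteq\mathbb{T}_n(X)$. The partial order $\leq_{\mathbb{T}_n(X)}$ is defined recursively: $\overline x\leq t$ iff either $t=\overline y$ with $x\leq_X y$, or $t=j\star[t_0,\dots,t_{m-1}]$ and $\overline x\leq t_l$ for some $l<m$; $i\star\sigma\leq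 t$ iff either $t=i\star\tau$ with $\sigma\leq_{M(\mathbb{T}_n(X))}\tau$, or $t=j\star[t_0,\dots,t_{m-1}]$ with $j\geq i$ and $i\star\sigma\leq t_l$ for some $l<m$; $\leq_{\mathbb{T}_n^-(X)}$ is its restriction. Supports: $\operatorname{supp}^{\mathbb{T}_n}_X(\overline x)=\{x\}$, $\operatorname{supp}^{\mathbb{T}_n}_X(i\star[t_0,\dots,t_{m-1}])=\bigcup_{l<m}\operatorname{supp}^{\mathbb{T}_n}_X(t_l)$. For finite $b\subseteq Z$, $s\leq^{\mathrm{fin}}_Z b$ means $s\leq_Z y$ for some $y\in b$. The map $\pi^n_X:\mathbb{T}_n(\mathbb{T}_{n+1}^-(X))\to\mathbb{T}_{n+1}(X)$ is defined recursively by $\pi^n_X(\overline t)=t$ (for $t\in\mathbb{T}_{n+1}^-(X)\subseteq\mathbb{T}_{n+1}(X)$) and $\pi^n_X(i\star[s_0,\dots,s_{m-1}])=(i+1)\star[\pi^n_X(s_0),\dots,\pi^n_X(s_{m-1})]$. *)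

theory Defs
  imports "HOL-Library.Multiset"
begin

datatype 'a tm = Leaf 'a | Node nat "'a tm multiset"

definition mleq :: "('a \<Rightarrow> 'b \<Rightarrow> bool) \<Rightarrow> 'a multiset \<Rightarrow> 'b multiset \<Rightarrow> bool" where
  "mleq r M N \<longleftrightarrow> (\<exists>xs ys g. mset xs = M \<and> mset ys = N \<and>
      inj_on g {..<length xs} \<and> g ` {..<length xs} \<subseteq> {..<length ys} \<and>
      (\<forall>i<length xs. r (xs ! i) (ys ! g i)))"

lemma mleq_mono[mono]: "(\<And>x y. r x y \<longrightarrow> s x y) \<Longrightarrow> mleq r M N \<longrightarrow> mleq s M N"
proof
  assume r: "\<And>x y. r x y \<longrightarrow> s x y" and "mleq r M N"
  then obtain xs ys g where "mset xs = M" "mset ys = N" "inj_on g {..<length xs}"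
      "g ` {..<length xs} \<subseteq> {..<length ys}" "\<forall>i<length xs. r (xs ! i) (ys ! g i)"
    unfolding mleq_def by blast
  then show "mleq s M N" unfolding mleq_def using r by blast
qed

inductive_set Tn :: "nat \<Rightarrow> 'a set \<Rightarrow> 'a tm set" for n A where
  leaf: "x \<in> A \<Longrightarrow> Leaf x \<in> Tn n A"
| node: "i < n \<Longrightarrow> (\<forall>t\<in>set_mset ts. t \<in> Tn n A) \<Longrightarrow> Node i ts \<in> Tn n A"

definition Tminus :: "nat \<Rightarrow> 'a set \<Rightarrow> 'a tm set" where
  "Tminus n A = {Leaf x | x. x \<in> A} \<union> {Node 0 ts | ts. Node 0 ts \<in> Tn n A}"

text \<open>The order on terms, given the order le on X (the least relation closed under the
  defining clauses, which agrees with the structural recursive definition).\<close>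
inductive leT :: "('a \<Rightarrow> 'a \<Rightarrow> bool) \<Rightarrow> 'a tm \<Rightarrow> 'a tm \<Rightarrow> bool" for le where
  leaf_leaf: "le x y \<Longrightarrow> leT le (Leaf x) (Leaf y)"
| leaf_node: "t \<in># ts \<Longrightarrow> leT le (Leaf x) t \<Longrightarrow> leT le (Leaf x) (Node j ts)"
| node_node: "mleq (leT le) ss ts \<Longrightarrow> leT le (Node i ss) (Node i ts)"
| node_sub: "i \<le> j \<Longrightarrow> t \<in># ts \<Longrightarrow> leT le (Node i ss) t \<Longrightarrow> leT le (Node i ss) (Node j ts)"

primrec suppT :: "'a tm \<Rightarrow> 'a set" where
  "suppT (Leaf x) = {x}"
| "suppT (Node i ts) = \<Union> (set_mset (image_mset suppT ts))"

text \<open>The collapsing map pi^n_X (independent of n as a function on terms).\<close>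
primrec piT :: "'a tm tm \<Rightarrow> 'a tm" where
  "piT (Leaf t) = t"
| "piT (Node i ss) = Node (Suc i) (image_mset piT ss)"

end

theory Submission
  imports Defs
begin

text \<open>Every inner node of \<open>piT t\<close> carries a positive label, while \<open>s\<close> is a leaf or has label 0.
  So \<open>s\<close> can lie below such a node only through one of its children, and induction on \<open>t\<close>
  pushes \<open>s\<close> down to a leaf of \<open>t\<close>, i.e. to an element of its support.\<close>

lemma leT_Node_iff_below_label:
  assumes "\<And>k ss. s = Node k ss \<Longrightarrow> k < j"
  shows "leT le s (Node j ts) \<longleftrightarrow> (\<exists>t\<in>#ts. leT le s t)"
proof
  assume "leT le s (Node j ts)"
  then show "\<exists>t\<in>#ts. leT le s t"
    using assms by (cases rule: leT.cases) auto
next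
  assume "\<exists>t\<in>#ts. leT le s t"
  then obtain t where "t \<in># ts" "leT le s t" by blast
  then show "leT le s (Node j ts)"
    using assms by (cases s) (auto intro: leT.leaf_node leT.node_sub less_imp_le)
qed

lemma leT_piT_iff_supp:
  assumes "\<And>k ss. s = Node k ss \<Longrightarrow> k = 0"
  shows "leT le s (piT t) \<longleftrightarrow> (\<exists>t'\<in>suppT t. leT le s t')"
proof (induction t)
  case (Leaf u)
  then show ?case by simp
next
  case (Node i us)
  have "leT le s (piT (Node i us)) \<longleftrightarrow> (\<exists>u\<in>#image_mset piT us. leT le s u)"
    unfolding piT.simps by (rule leT_Node_iff_below_label) (use assms in auto)
  also have "\<dots> \<longleftrightarrow> (\<exists>t'\<in>suppT (Node i us). leT le s t')"
    using Node.IH by fastforce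
  finally show ?case .
qed

theorem lemma6p3:
  fixes n :: nat and s :: "'a::order tm" and t :: "'a tm tm"
  assumes "s \<in> Tminus (Suc n) (UNIV :: 'a set)"
    and "t \<in> Tn n (Tminus (Suc n) (UNIV :: 'a set))"
  shows "leT (\<le>) s (piT t) \<longleftrightarrow> (\<exists>t'\<in>suppT t. leT (\<le>) s t')"
proof (rule leT_piT_iff_supp)
  show "\<And>k ss. s = Node k ss \<Longrightarrow> k = 0"
    using assms(1) by (auto simp: Tminus_def)
qed

end
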